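(* Let $\mathbb{R}^n$ be endowed with the $\ell_1$ norm and $\mathbb{R}^p$ with a norm $\|\cdot\|$. Let $A\in\mathbb{R}^{m\times n}$, $b\in\mathbb{R}^m$ and $E\in\mathbb{R}^{p\times m}$ be such that $\begin{bmatrix}EA\\ b^{\mathsf T}A\end{bmatrix}$ has at least two different columns. Let $f:\mathbb{R}^m\to\mathbb{R}\cup\{\infty\}$ be $f(u)=g(Eu)+\langle b,u\rangle$, where $g:\mathbb{R}^p\to\mathbb{R}\cup\{\infty\}$ is a differentiable convex function that is $\mu_g$-strongly convex on $\mathrm{conv}(EA)$ for some $\mu_g>0$, and $\mathrm{conv}(A)\subseteq\mathrm{dom}(f)$. Then $v=\frac{2}{\mu_g}\nabla g(Eu^\star)$ is the same for all $u^\star\in\operatorname{Argmin}_{u\in\mathrm{conv}(A)}f(u)$, and \[ \mu^\star_{f,A}\ge\frac{\mu_g\cdot\Phi_v(\bar A)^2}{4}>0,\qquad\text{where } \bar A:=\begin{bmatrix}EA\\ \frac{2}{\mu_g}b^{\mathsf T}A\end{bmatrix}\in\mathbb{R}^{(p+1)\times n}. \]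
   Context: $g$ is $\mu_g$-strongly convex on $S$ if $g(w')\ge g(w)+\langle\nabla g(w),w'-w\rangle+\frac{\mu_g}{2}\|w'-w\|^2$ for all $w,w'\in S$. $\Delta_{n-1}=\{x\in\mathbb{R}^n_+:\sum_ix_i=1\}$; a matrix is identified with the set of its columns; $\mathrm{conv}(A)=\{Ax:x\in\Delta_{n-1}\}$. Quadratic functional growth constant: with $f^\star=\min_{x\in\Delta_{n-1}}f(Ax)$ and $Z^\star=\{z\in\Delta_{n-1}:f(Az)=f^\star\}$, $\mu^\star_{f,A}=\inf_{x\in\Delta_{n-1}\setminus Z^\star}\frac{2(f(Ax)-f^\star)}{\mathrm{dist}(x,Z^\star)^2}$, where $\mathrm{dist}(x,Z^\star)=\min_{z\in Z^\star}\|x-z\|_1$. Local facial distance: for $v\in\mathbb{R}^p$ and $\bar w=(w,w_{p+1})\in\mathbb{R}^{p+1}$ put $\|\bar w\|_v=\sqrt{\|w\|^2+|\langle v,w\rangle+w_{p+1}|}$, and for nonempty $F,G\subseteq\mathbb{R}^{p+1}$ put $\mathrm{dist}_v(F,G)=\min_{\bar w\in F,\bar w'\in G}\|\bar w-\bar w'\|_v$. For $\bar A\in\mathbb{R}^{(p+1)\times n}$ with at least two different columns let $F(v)=\operatorname{Argmin}_{\bar w\in\mathrm{conv}(\bar A)}\langle (v,1),\bar w\rangle$ (a face of $\mathrm{conv}(\bar A)$), and $\Phi_v(\bar A)=\min\{\mathrm{dist}_v(G,\mathrm{conv}(\bar A\setminus G)): G\text{ a face of }F(v),\ \emptyset\ne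 G\ne\mathrm{conv}(\bar A)\}$, where $\bar A\setminus G$ denotes the columns of $\bar A$ not in $G$. *)

theory Defs
  imports "HOL-Analysis.Analysis"
begin

definition is_norm :: "(real^'p \<Rightarrow> real) \<Rightarrow> bool" where
  "is_norm N \<longleftrightarrow> (\<forall>x. 0 \<le> N x) \<and> (\<forall>x. N x = 0 \<longleftrightarrow> x = 0)
     \<and> (\<forall>c x. N (c *\<^sub>R x) = \<bar>c\<bar> * N x) \<and> (\<forall>x y. N (x + y) \<le> N x + N y)"

definition std_simplex :: "(real^'n) set" where
  "std_simplex = {x. (\<forall>i. 0 \<le> x$i) \<and> (\<Sum>i\<in>UNIV. x$i) = 1}"

definition l1dist :: "real^'n \<Rightarrow> real^'n \<Rightarrow> real" where
  "l1dist x z = (\<Sum>i\<in>UNIV. \<bar>x$i - z$i\<bar>)"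

definition ext_convex :: "('a::real_vector \<Rightarrow> ereal) \<Rightarrow> bool" where
  "ext_convex g \<longleftrightarrow> (\<forall>x y t. 0 \<le> t \<and> t \<le> 1 \<longrightarrow>
      g ((1 - t) *\<^sub>R x + t *\<^sub>R y) \<le> ereal (1 - t) * g x + ereal t * g y)"

definition grad :: "(real^'p \<Rightarrow> ereal) \<Rightarrow> real^'p \<Rightarrow> real^'p" where
  "grad g w = (SOME d. ((\<lambda>x. real_of_ereal (g x)) has_derivative (\<lambda>h. d \<bullet> h)) (at w))"

definition strongly_convex_on ::
  "(real^'p \<Rightarrow> real) \<Rightarrow> (real^'p \<Rightarrow> ereal) \<Rightarrow> real \<Rightarrow> (real^'p) set \<Rightarrow> bool" where
  "strongly_convex_on N g \<mu> S \<longleftrightarrow> (\<forall>w\<in>S. \<forall>w'\<in>S.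
      g w' \<ge> g w + ereal (grad g w \<bullet> (w' - w) + \<mu> / 2 * (N (w' - w))\<^sup>2))"

definition argmin_on :: "'a set \<Rightarrow> ('a \<Rightarrow> 'b::order) \<Rightarrow> 'a set" where
  "argmin_on S f = {u \<in> S. \<forall>u'\<in>S. f u \<le> f u'}"

text \<open>Quadratic functional growth constant mu*_{f,A} (infimum over the empty set is +\<infinity>).\<close>
definition qfg_const :: "(real^'m \<Rightarrow> ereal) \<Rightarrow> real^'n^'m \<Rightarrow> ereal" where
  "qfg_const f A =
    (let fs = (INF x\<in>std_simplex. f (A *v x));
         Z = {z \<in> std_simplex. f (A *v z) = fs}
     in (INF x\<in>std_simplex - Z.
           2 * (f (A *v x) - fs) / ereal ((INF z\<in>Z. l1dist x z)\<^sup>2)))"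

definition vnorm :: "(real^'p \<Rightarrow> real) \<Rightarrow> real^'p \<Rightarrow> (real^'p) \<times> real \<Rightarrow> real" where
  "vnorm N v w = sqrt ((N (fst w))\<^sup>2 + \<bar>v \<bullet> fst w + snd w\<bar>)"

definition distv :: "(real^'p \<Rightarrow> real) \<Rightarrow> real^'p \<Rightarrow> ((real^'p) \<times> real) set
    \<Rightarrow> ((real^'p) \<times> real) set \<Rightarrow> real" where
  "distv N v F G = Inf {vnorm N v (w - w') | w w'. w \<in> F \<and> w' \<in> G}"

definition Fface :: "real^'p \<Rightarrow> ('n \<Rightarrow> (real^'p) \<times> real) \<Rightarrow> ((real^'p) \<times> real) set" where
  "Fface v cols = argmin_on (convex hull (range cols)) (\<lambda>w. v \<bullet> fst w + snd w)"

definition local_facial_distance ::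
  "(real^'p \<Rightarrow> real) \<Rightarrow> real^'p \<Rightarrow> ('n \<Rightarrow> (real^'p) \<times> real) \<Rightarrow> real" where
  "local_facial_distance N v cols =
     Inf {distv N v G (convex hull {cols j | j. cols j \<notin> G}) | G.
            G face_of Fface v cols \<and> G \<noteq> {} \<and> G \<noteq> convex hull (range cols)}"

end

theory Submission
  imports Defs
begin

(* Strong convexity of g makes E u and b.u the same for all minimizers u, so the optimal
   weights Z form the fibre {z in the simplex. Abar z = Abar z0} of the lifted matrix
   Abar = [EA; (2/mu) b'A], and first-order optimality puts Abar z0 on the face F(v) of
   conv(Abar) that minimizes <(v,1),.>.  Strong convexity plus first-order optimality give
   f(Ax) - f* >= (mu/2) ||Abar x - Abar z0||_v^2.
   For x outside Z, let z be an l1-nearest point of Z and write x - z = lam (alpha - beta) with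
   alpha, beta in the simplex and 2 lam = ||x - z||_1.  Let G be the smallest face of conv(Abar)
   containing Abar beta; it is a face of F(v).  No column used by alpha lies in G: otherwise
   part of the mass of beta could be rerouted through that column inside G, giving a point of Z
   closer to x.  Hence Abar alpha lies in conv(Abar \ G), so
   ||Abar x - Abar z||_v >= lam Phi_v(Abar), and the bound follows. *)

section \<open>Barycentric combinations\<close>

definition weighted_sum :: "real^'n \<Rightarrow> ('n \<Rightarrow> 'v::real_vector) \<Rightarrow> 'v" where
  "weighted_sum x c = (\<Sum>j\<in>UNIV. x$j *\<^sub>R c j)"

lemma mem_std_simplex: "x \<in> std_simplex \<longleftrightarrow> (\<forall>i. 0 \<le> x$i) \<and> (\<Sum>i\<in>UNIV. x$i) = 1"
  by (simp add: std_simplex_def)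

lemma axis_in_std_simplex: "axis j (1::real) \<in> std_simplex"
  by (simp add: mem_std_simplex axis_def)

lemma std_simplex_nonzero_entry:
  assumes "x \<in> std_simplex" obtains i where "x$i \<noteq> 0"
  using assms by (force simp: mem_std_simplex)

lemma weighted_sum_axis: "weighted_sum (axis j 1) c = c j"
proof -
  have "\<And>k. (axis j (1::real))$k *\<^sub>R c k = (if k = j then c j else 0)" by (simp add: axis_def)
  then show ?thesis by (simp add: weighted_sum_def)
qed

lemma weighted_sum_add: "weighted_sum (x + y) c = weighted_sum x c + weighted_sum y c"
  by (simp add: weighted_sum_def scaleR_add_left sum.distrib)

lemma weighted_sum_diff: "weighted_sum (x - y) c = weighted_sum x c - weighted_sum y c"
  by (simp add: weighted_sum_def scaleR_diff_left sum_subtractf)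

lemma weighted_sum_scaleR: "weighted_sum (a *\<^sub>R x) c = a *\<^sub>R weighted_sum x c"
  by (simp add: weighted_sum_def scaleR_sum_right)

lemma continuous_on_weighted_sum:
  fixes c :: "'n::finite \<Rightarrow> 'v::real_normed_vector"
  shows "continuous_on S (\<lambda>x. weighted_sum x c)"
  unfolding weighted_sum_def by (intro continuous_intros)

lemma matrix_vector_mult_eq_weighted_sum: "(A::real^'n^'m) *v x = weighted_sum x (\<lambda>j. column j A)"
  by (simp add: weighted_sum_def matrix_mult_sum scalar_mult_eq_scaleR)

lemma inner_weighted_sum: "a \<bullet> weighted_sum x c = (\<Sum>j\<in>UNIV. x$j * (a \<bullet> c j))"
  by (simp add: weighted_sum_def inner_sum_right)

lemma linear_weighted_sum: "linear f \<Longrightarrow> f (weighted_sum x c) = weighted_sum x (\<lambda>j. f (c j))"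
  unfolding weighted_sum_def by (simp add: linear_sum linear_scale)

lemma convex_hull_subset_weighted_sums:
  fixes c :: "'n::finite \<Rightarrow> 'v::real_vector"
  assumes "y \<in> convex hull (c ` J)"
  obtains x where "x \<in> std_simplex" "\<And>j. j \<notin> J \<Longrightarrow> x$j = 0" "y = weighted_sum x c"
proof -
  let ?T = "{weighted_sum x c | x. x \<in> std_simplex \<and> (\<forall>j. j \<notin> J \<longrightarrow> x$j = 0)}"
  have "convex ?T"
  proof (rule convexI)
    fix y1 y2 and u v :: real
    assume "y1 \<in> ?T" "y2 \<in> ?T" and uv: "0 \<le> u" "0 \<le> v" "u + v = 1"
    then obtain x1 x2 where x1: "x1 \<in> std_simplex" "\<forall>j. j \<notin> J \<longrightarrow> x1$j = 0" "y1 = weighted_sum x1 c"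
      and x2: "x2 \<in> std_simplex" "\<forall>j. j \<notin> J \<longrightarrow> x2$j = 0" "y2 = weighted_sum x2 c" by blast
    have "u *\<^sub>R x1 + v *\<^sub>R x2 \<in> std_simplex"
      using x1(1) x2(1) uv by (simp add: mem_std_simplex sum.distrib sum_distrib_left[symmetric])
    moreover have "u *\<^sub>R y1 + v *\<^sub>R y2 = weighted_sum (u *\<^sub>R x1 + v *\<^sub>R x2) c"
      using x1(3) x2(3) by (simp add: weighted_sum_add weighted_sum_scaleR)
    ultimately show "u *\<^sub>R y1 + v *\<^sub>R y2 \<in> ?T" using x1(2) x2(2) by force
  qed
  moreover have "c ` J \<subseteq> ?T"
  proof
    fix y assume "y \<in> c ` J"
    then obtain j where "j \<in> J" "y = c j" by blast
    then show "y \<in> ?T"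
      using axis_in_std_simplex[of j] weighted_sum_axis[of j c]
      by (intro CollectI exI[of _ "axis j 1"]) (auto simp: axis_def)
  qed
  ultimately have "convex hull (c ` J) \<subseteq> ?T" by (rule hull_minimal[rotated])
  then show ?thesis using assms that by blast
qed

lemma weighted_sum_in_convex_hull:
  assumes "x \<in> std_simplex" "\<And>j. x$j \<noteq> 0 \<Longrightarrow> j \<in> K"
  shows "weighted_sum x c \<in> convex hull (c ` K)"
proof -
  have "weighted_sum x c = (\<Sum>j\<in>K. x$j *\<^sub>R c j)"
    unfolding weighted_sum_def using assms(2) by (intro sum.mono_neutral_right) auto
  moreover have "(\<Sum>j\<in>K. x$j) = 1"
    using assms by (metis (mono_tags, lifting) DiffD2 finite sum.mono_neutral_right mem_std_simplex subset_UNIV)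
  ultimately show ?thesis
    using assms(1) by (auto simp: mem_std_simplex hull_inc intro!: convex_sum)
qed

lemma convex_hull_range_eq_weighted_sums:
  "convex hull (range c) = (\<lambda>x. weighted_sum x c) ` std_simplex"
proof (rule set_eqI)
  fix y
  show "y \<in> convex hull (range c) \<longleftrightarrow> y \<in> (\<lambda>x. weighted_sum x c) ` std_simplex"
    using convex_hull_subset_weighted_sums[of y c UNIV] weighted_sum_in_convex_hull[of _ UNIV c]
    by blast
qed

lemma compact_std_simplex: "compact (std_simplex :: (real^'n::finite) set)"
proof -
  have "\<And>x::real^'n. weighted_sum x (\<lambda>j. axis j 1) = x"
    unfolding weighted_sum_def by (metis (no_types) basis_expansion scalar_mult_eq_scaleR)
  then have "std_simplex = convex hull (range (\<lambda>j::'n. axis j (1::real)))"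
    unfolding convex_hull_range_eq_weighted_sums by simp
  then show ?thesis by (metis finite finite_imageI finite_imp_compact_convex_hull)
qed

lemma l1dist_nonneg: "0 \<le> l1dist x z"
  unfolding l1dist_def by (intro sum_nonneg) simp

lemma l1dist_pos: "x \<noteq> z \<Longrightarrow> 0 < l1dist x z"
proof -
  assume "x \<noteq> z"
  then obtain i where "x$i \<noteq> z$i" by (auto simp: vec_eq_iff)
  then have "0 < \<bar>x$i - z$i\<bar>" by simp
  also have "\<dots> \<le> l1dist x z" unfolding l1dist_def by (rule member_le_sum) auto
  finally show ?thesis .
qed

lemma l1dist_le_2:
  assumes "x \<in> std_simplex" "z \<in> std_simplex" shows "l1dist x z \<le> 2"
proof -
  have "l1dist x z \<le> (\<Sum>i\<in>UNIV. x$i + z$i)" unfolding l1dist_def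
    using assms by (intro sum_mono) (auto simp: mem_std_simplex abs_le_iff)
  also have "\<dots> = 2" using assms by (simp add: sum.distrib mem_std_simplex)
  finally show ?thesis .
qed

lemma continuous_on_l1dist: "continuous_on S (l1dist x)"
  unfolding l1dist_def[abs_def] by (intro continuous_intros)

section \<open>Norms and the local norm\<close>

lemma is_normD:
  assumes "is_norm N"
  shows "0 \<le> N x" "N x = 0 \<longleftrightarrow> x = 0" "N (c *\<^sub>R x) = \<bar>c\<bar> * N x" "N (x + y) \<le> N x + N y"
  using assms by (auto simp: is_norm_def)

lemma is_norm_sum_le:
  assumes "is_norm N" shows "N (\<Sum>i\<in>I. f i) \<le> (\<Sum>i\<in>I. N (f i))"
proof (induction I rule: infinite_finite_induct)
  case (insert i I)
  have "N (f i + sum f I) \<le> N (f i) + N (sum f I)" by (rule is_normD(4)[OF assms])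
  then show ?case using insert by simp
qed (use is_normD(2)[OF assms, of 0] in simp_all)

lemma is_norm_minus_commute:
  assumes "is_norm N" shows "N (x - y) = N (y - x)"
proof -
  have "N (x - y) = N ((-1) *\<^sub>R (y - x))" by simp
  also have "\<dots> = N (y - x)" unfolding is_normD(3)[OF assms] by simp
  finally show ?thesis .
qed

lemma is_norm_le_sum_axis:
  assumes "is_norm N" shows "N x \<le> (\<Sum>i\<in>UNIV. N (axis i 1)) * norm x"
proof -
  have "N x = N (\<Sum>i\<in>UNIV. x$i *\<^sub>R axis i 1)"
    by (metis (no_types) basis_expansion scalar_mult_eq_scaleR)
  also have "\<dots> \<le> (\<Sum>i\<in>UNIV. N (x$i *\<^sub>R axis i 1))" by (rule is_norm_sum_le[OF assms])
  also have "\<dots> = (\<Sum>i\<in>UNIV. \<bar>x$i\<bar> * N (axis i 1))" unfolding is_normD(3)[OF assms] ..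
  also have "\<dots> \<le> (\<Sum>i\<in>UNIV. norm x * N (axis i 1))"
    by (intro sum_mono mult_right_mono component_le_norm_cart is_normD(1)[OF assms])
  finally show ?thesis by (simp add: sum_distrib_left mult.commute)
qed

lemma continuous_on_is_norm:
  assumes "is_norm N" shows "continuous_on S N"
proof -
  define C where "C = (\<Sum>i\<in>UNIV. N (axis i 1))"
  have "C \<ge> 0" unfolding C_def by (intro sum_nonneg is_normD(1)[OF assms])
  then have "C-lipschitz_on UNIV N"
  proof (rule lipschitz_onI[rotated])
    fix x y :: "real^'a"
    have "N x \<le> N (x - y) + N y" "N y \<le> N (y - x) + N x"
      using is_normD(4)[OF assms] by (metis diff_add_cancel)+
    then have "\<bar>N x - N y\<bar> \<le> N (x - y)" using is_norm_minus_commute[OF assms, of x y] by linarith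
    also have "\<dots> \<le> C * norm (x - y)" unfolding C_def by (rule is_norm_le_sum_axis[OF assms])
    finally show "dist (N x) (N y) \<le> C * dist x y" by (simp add: dist_norm dist_real_def)
  qed
  then show ?thesis by (meson continuous_on_subset lipschitz_on_continuous_on top_greatest)
qed

lemma vnorm_nonneg: "0 \<le> vnorm N v w"
  by (simp add: vnorm_def)

lemma vnorm_pos:
  assumes "is_norm N" "w \<noteq> 0" shows "0 < vnorm N v w"
proof (cases "fst w = 0")
  case True
  then have "snd w \<noteq> 0" using assms(2) by (cases w) (auto simp: zero_prod_def)
  then show ?thesis using True is_normD(2)[OF assms(1), of 0] by (simp add: vnorm_def)
next
  case False
  then have "N (fst w) \<noteq> 0" using is_normD(2)[OF assms(1)] by blast
  then show ?thesis by (simp add: vnorm_def add_pos_nonneg)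
qed

lemma vnorm_scaleR_ge:
  assumes "is_norm N" "\<bar>c\<bar> \<le> 1"
  shows "c\<^sup>2 * (vnorm N v w)\<^sup>2 \<le> (vnorm N v (c *\<^sub>R w))\<^sup>2"
proof -
  define X where "X = \<bar>v \<bullet> fst w + snd w\<bar>"
  have "c\<^sup>2 \<le> \<bar>c\<bar>"
    using mult_left_le[OF assms(2) abs_ge_zero[of c]] by (metis abs_mult_self_eq power2_eq_square)
  then have "c\<^sup>2 * X \<le> \<bar>c\<bar> * X" by (rule mult_right_mono) (simp add: X_def)
  moreover have "\<bar>v \<bullet> fst (c *\<^sub>R w) + snd (c *\<^sub>R w)\<bar> = \<bar>c\<bar> * X"
    unfolding X_def by (simp add: abs_mult[symmetric] algebra_simps)
  moreover have "N (fst (c *\<^sub>R w)) = \<bar>c\<bar> * N (fst w)" by (simp add: is_normD(3)[OF assms(1)])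
  ultimately show ?thesis
    unfolding vnorm_def X_def by (simp add: power_mult_distrib distrib_left)
qed

lemma continuous_on_vnorm:
  assumes "is_norm N" shows "continuous_on S (vnorm N v)"
proof -
  have "continuous_on S (\<lambda>w. N (fst w))"
    using continuous_on_compose2[OF continuous_on_is_norm[OF assms] continuous_on_fst[OF continuous_on_id]]
    by blast
  then show ?thesis unfolding vnorm_def[abs_def] by (intro continuous_intros)
qed

section \<open>Faces and the local facial distance\<close>

lemma polytope_convex_hull_range:
  fixes c :: "'n::finite \<Rightarrow> 'v::euclidean_space"
  shows "polytope (convex hull (range c))"
  unfolding polytope_def by (intro exI[of _ "range c"]) auto

lemma face_of_convex_hull_range_support:
  fixes c :: "'n::finite \<Rightarrow> 'v::euclidean_space"
  assumes G: "G face_of convex hull (range c)"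
    and x: "x \<in> std_simplex" "weighted_sum x c \<in> G" and xj: "x$j \<noteq> 0"
  shows "c j \<in> G"
proof -
  obtain a d where hull: "convex hull (range c) \<subseteq> {y. a \<bullet> y \<le> d}"
    and G_eq: "G = convex hull (range c) \<inter> {y. a \<bullet> y = d}"
    using G exposed_face_of_polyhedron[OF polytope_imp_polyhedron[OF polytope_convex_hull_range]]
    unfolding exposed_face_of_def by blast
  have le: "a \<bullet> c k \<le> d" for k
  proof -
    have "c k \<in> convex hull (range c)" by (simp add: hull_inc)
    then show ?thesis using hull by blast
  qed
  have x_nonneg: "\<And>k. 0 \<le> x$k" and x_sum: "(\<Sum>k\<in>UNIV. x$k) = 1"
    using x(1) by (auto simp: mem_std_simplex)
  have "(\<Sum>k\<in>UNIV. x$k * (d - a \<bullet> c k)) = d * (\<Sum>k\<in>UNIV. x$k) - a \<bullet> weighted_sum x c"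
    by (simp add: inner_weighted_sum right_diff_distrib sum_subtractf sum_distrib_left mult.commute)
  also have "\<dots> = 0" using x(2) x_sum G_eq by simp
  finally have "(\<Sum>k\<in>UNIV. x$k * (d - a \<bullet> c k)) = 0" .
  moreover have "\<forall>k\<in>UNIV. 0 \<le> x$k * (d - a \<bullet> c k)" using x_nonneg le by simp
  ultimately have "\<forall>k\<in>UNIV. x$k * (d - a \<bullet> c k) = 0" by (simp add: sum_nonneg_eq_0_iff)
  then have "x$j * (d - a \<bullet> c j) = 0" by blast
  then have "a \<bullet> c j = d" using xj by simp
  moreover have "c j \<in> convex hull (range c)" by (simp add: hull_inc)
  ultimately show ?thesis unfolding G_eq by blast
qed

lemma face_of_convex_hull_range_disjoint:
  fixes c :: "'n::finite \<Rightarrow> 'v::euclidean_space"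
  assumes G: "G face_of convex hull (range c)"
  shows "G \<inter> convex hull {c j | j. c j \<notin> G} = {}"
proof (rule ccontr)
  assume "\<not> ?thesis"
  then obtain y where y: "y \<in> G" "y \<in> convex hull {c j | j. c j \<notin> G}" by blast
  have "{c j | j. c j \<notin> G} = c ` {j. c j \<notin> G}" by blast
  then have "y \<in> convex hull (c ` {j. c j \<notin> G})" using y(2) by simp
  then obtain x where x: "x \<in> std_simplex" "\<And>j. j \<notin> {j. c j \<notin> G} \<Longrightarrow> x$j = 0"
    "y = weighted_sum x c"
    by (rule convex_hull_subset_weighted_sums) blast
  obtain j where j: "x$j \<noteq> 0" using x(1) by (rule std_simplex_nonzero_entry)
  then have "c j \<in> G" using face_of_convex_hull_range_support[OF G x(1)] x(3) y(1) by blast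
  then show False using x(2) j by blast
qed

lemma minimal_face_rel_interior:
  fixes P :: "'a::euclidean_space set"
  assumes P: "polytope P" and y: "y \<in> P"
  obtains G where "G face_of P" "y \<in> rel_interior G" "\<And>H. H face_of P \<Longrightarrow> y \<in> H \<Longrightarrow> G \<subseteq> H"
proof
  define G where "G = \<Inter>{H. H face_of P \<and> y \<in> H}"
  have ne: "{H. H face_of P \<and> y \<in> H} \<noteq> {}" using y face_of_refl[OF polytope_imp_convex[OF P]] by auto
  show fG: "G face_of P" unfolding G_def by (rule face_of_Inter[OF ne]) auto
  show "\<And>H. H face_of P \<Longrightarrow> y \<in> H \<Longrightarrow> G \<subseteq> H" unfolding G_def by blast
  have yG: "y \<in> G" unfolding G_def by auto
  have pG: "polytope G" using face_of_polytope_polytope[OF P fG] .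
  show "y \<in> rel_interior G"
  proof (rule ccontr)
    assume "y \<notin> rel_interior G"
    then have "y \<in> rel_frontier G"
      using yG polytope_imp_closed[OF pG] by (simp add: rel_frontier_def closure_closed)
    then obtain H where H: "H face_of G" "H \<noteq> G" "y \<in> H"
      using rel_frontier_of_polyhedron_alt[OF polytope_imp_polyhedron[OF pG]] by blast
    have "G \<subseteq> H" unfolding G_def using face_of_trans[OF H(1) fG] H(3) by blast
    then show False using face_of_imp_subset[OF H(1)] H(2) by blast
  qed
qed

lemma inner_Pair_one: "(v, 1) \<bullet> w = v \<bullet> fst w + snd w"
  by (cases w) simp

lemma Fface_supporting_hyperplane:
  fixes cols :: "'n::finite \<Rightarrow> (real^'p) \<times> real"
  obtains t where "\<And>w. w \<in> convex hull (range cols) \<Longrightarrow> t \<le> (v, 1) \<bullet> w"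
    "Fface v cols = convex hull (range cols) \<inter> {w. (v, 1) \<bullet> w = t}" "Fface v cols \<noteq> {}"
proof -
  let ?S = "convex hull (range cols)"
  have "compact ?S" by (simp add: finite_imp_compact_convex_hull)
  moreover have "continuous_on ?S (\<lambda>w. (v, 1) \<bullet> w)" by (intro continuous_intros)
  ultimately obtain w0 where w0: "w0 \<in> ?S" "\<And>w. w \<in> ?S \<Longrightarrow> (v, 1) \<bullet> w0 \<le> (v, 1) \<bullet> w"
    using continuous_attains_inf[of ?S] by fastforce
  have F: "Fface v cols = {w \<in> ?S. \<forall>w'\<in>?S. (v, 1) \<bullet> w \<le> (v, 1) \<bullet> w'}"
    by (simp add: Fface_def argmin_on_def inner_Pair_one)
  show ?thesis
  proof
    show "Fface v cols = ?S \<inter> {w. (v, 1) \<bullet> w = (v, 1) \<bullet> w0}"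
      unfolding F using w0 by (auto intro: antisym)
    then show "Fface v cols \<noteq> {}" using w0(1) by blast
  qed (use w0 in blast)
qed

lemma Fface_face_of:
  fixes cols :: "'n::finite \<Rightarrow> (real^'p) \<times> real"
  shows "Fface v cols face_of convex hull (range cols)"
proof -
  obtain t where t: "\<And>w. w \<in> convex hull (range cols) \<Longrightarrow> t \<le> (v, 1) \<bullet> w"
    and F: "Fface v cols = convex hull (range cols) \<inter> {w. (v, 1) \<bullet> w = t}"
    by (rule Fface_supporting_hyperplane[of cols v]) auto
  show ?thesis unfolding F by (rule face_of_Int_supporting_hyperplane_ge) (simp_all add: t)
qed

lemma distv_le:
  assumes "w \<in> F" "w' \<in> G" shows "distv N v F G \<le> vnorm N v (w - w')"
proof -
  have "vnorm N v (w - w') \<in> {vnorm N v (w - w') | w w'. w \<in> F \<and> w' \<in> G}" using assms by blast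
  moreover have "bdd_below {vnorm N v (w - w') | w w'. w \<in> F \<and> w' \<in> G}"
    by (rule bdd_belowI[of _ 0]) (use vnorm_nonneg in blast)
  ultimately show ?thesis unfolding distv_def by (rule cInf_lower)
qed

lemma distv_pos:
  assumes N: "is_norm N" and "compact F" "compact G" "F \<noteq> {}" "G \<noteq> {}" "F \<inter> G = {}"
  shows "0 < distv N v F G"
proof -
  define K where "K = {w - w' | w w'. w \<in> F \<and> w' \<in> G}"
  have K: "compact K" "K \<noteq> {}" unfolding K_def using compact_differences[OF assms(2,3)] assms(4,5) by blast+
  obtain k0 where k0: "k0 \<in> K" "\<forall>k\<in>K. vnorm N v k0 \<le> vnorm N v k"
    using continuous_attains_inf[OF K continuous_on_vnorm[OF N]] by blast
  then obtain w w' where w: "k0 = w - w'" "w \<in> F" "w' \<in> G" unfolding K_def by blast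
  then have "k0 \<noteq> 0" using assms(6) by auto
  then have "0 < vnorm N v k0" by (rule vnorm_pos[OF N])
  also have "vnorm N v k0 \<le> distv N v F G"
  proof -
    have "vnorm N v k0 \<le> y" if "y \<in> {vnorm N v (w - w') | w w'. w \<in> F \<and> w' \<in> G}" for y
      using that k0(2) unfolding K_def by blast
    moreover have "{vnorm N v (w - w') | w w'. w \<in> F \<and> w' \<in> G} \<noteq> {}" using w by blast
    ultimately show ?thesis unfolding distv_def by (intro cInf_greatest) auto
  qed
  finally show ?thesis .
qed

lemma finite_local_facial_distances:
  fixes cols :: "'n::finite \<Rightarrow> (real^'p) \<times> real"
  shows "finite {distv N v G (convex hull {cols j | j. cols j \<notin> G}) | G.
            G face_of Fface v cols \<and> G \<noteq> {} \<and> G \<noteq> convex hull (range cols)}"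
proof -
  have "polytope (Fface v cols)"
    using face_of_polytope_polytope[OF polytope_convex_hull_range Fface_face_of] .
  then have "finite {G. G face_of Fface v cols}" by (rule finite_polytope_faces)
  then have "finite ((\<lambda>G. distv N v G (convex hull {cols j | j. cols j \<notin> G})) ` {G. G face_of Fface v cols})"
    by blast
  then show ?thesis by (rule finite_subset[rotated]) auto
qed

lemma local_facial_distance_le:
  fixes cols :: "'n::finite \<Rightarrow> (real^'p) \<times> real"
  assumes "G face_of Fface v cols" "G \<noteq> {}" "G \<noteq> convex hull (range cols)"
    and "w \<in> G" "w' \<in> convex hull {cols j | j. cols j \<notin> G}"
  shows "local_facial_distance N v cols \<le> vnorm N v (w - w')"
proof -
  have "local_facial_distance N v cols \<le> distv N v G (convex hull {cols j | j. cols j \<notin> G})"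
    unfolding local_facial_distance_def
    using assms(1-3) by (intro cInf_lower bdd_below_finite finite_local_facial_distances) auto
  also have "\<dots> \<le> vnorm N v (w - w')" using assms(4,5) by (rule distv_le)
  finally show ?thesis .
qed

lemma Fface_proper_face_exists:
  fixes cols :: "'n::finite \<Rightarrow> (real^'p) \<times> real"
  assumes "cols i \<noteq> cols j"
  obtains G where "G face_of Fface v cols" "G \<noteq> {}" "G \<noteq> convex hull (range cols)"
proof -
  have F: "Fface v cols face_of convex hull (range cols)" by (rule Fface_face_of)
  have "compact (Fface v cols)"
    using face_of_polytope_polytope[OF polytope_convex_hull_range F] by (rule polytope_imp_compact)
  moreover have "Fface v cols \<noteq> {}" by (rule Fface_supporting_hyperplane[of cols v]) auto
  ultimately obtain e where "e extreme_point_of Fface v cols"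
    using extreme_point_exists_convex face_of_imp_convex[OF F] by blast
  then have "{e} face_of Fface v cols" by (simp add: face_of_singleton)
  moreover have "{e} \<noteq> convex hull (range cols)"
  proof
    assume "{e} = convex hull (range cols)"
    moreover have "cols i \<in> convex hull (range cols)" "cols j \<in> convex hull (range cols)"
      by (simp_all add: hull_inc)
    ultimately show False using assms by (metis singletonD)
  qed
  ultimately show ?thesis using that by blast
qed

lemma local_facial_distance_pos:
  fixes cols :: "'n::finite \<Rightarrow> (real^'p) \<times> real"
  assumes N: "is_norm N" and "cols i \<noteq> cols j"
  shows "0 < local_facial_distance N v cols"
proof -
  let ?S = "convex hull (range cols)"
  define D where "D G = distv N v G (convex hull {cols j | j. cols j \<notin> G})" for G
  define Ds where "Ds = {D G | G. G face_of Fface v cols \<and> G \<noteq> {} \<and> G \<noteq> ?S}"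
  have fin: "finite Ds" unfolding Ds_def D_def by (rule finite_local_facial_distances)
  obtain G0 where "G0 face_of Fface v cols" "G0 \<noteq> {}" "G0 \<noteq> ?S"
    by (rule Fface_proper_face_exists[OF assms(2)])
  then have ne: "Ds \<noteq> {}" unfolding Ds_def by blast
  have "0 < D G" if G: "G face_of Fface v cols" "G \<noteq> {}" "G \<noteq> ?S" for G
  proof -
    have GS: "G face_of ?S" using face_of_trans[OF G(1) Fface_face_of] .
    obtain k where "cols k \<notin> G"
      using G(3) face_of_imp_subset[OF GS] hull_minimal[of "range cols" G convex] face_of_imp_convex[OF GS]
      by blast
    then have "{cols j | j. cols j \<notin> G} \<noteq> {}" by blast
    then have "convex hull {cols j | j. cols j \<notin> G} \<noteq> {}" by simp
    moreover have "compact G"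
      using face_of_polytope_polytope[OF polytope_convex_hull_range GS] by (rule polytope_imp_compact)
    moreover have "compact (convex hull {cols j | j. cols j \<notin> G})"
      by (rule finite_imp_compact_convex_hull) (rule finite_subset[of _ "range cols"], auto)
    ultimately show ?thesis
      unfolding D_def using distv_pos[OF N] G(2) face_of_convex_hull_range_disjoint[OF GS] by blast
  qed
  then have "\<forall>d\<in>Ds. 0 < d" unfolding Ds_def by blast
  moreover have "Inf Ds \<in> Ds" using fin ne by (simp add: cInf_eq_Min)
  ultimately show ?thesis unfolding local_facial_distance_def D_def Ds_def by blast
qed

section \<open>Nearest points in the l1 distance\<close>

lemma convex_std_simplex: "convex (std_simplex :: (real^'n::finite) set)"
  by (rule convexI) (auto simp: mem_std_simplex sum.distrib sum_distrib_left[symmetric])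

lemma l1dist_decomposition:
  assumes x: "x \<in> std_simplex" and z: "z \<in> std_simplex" and "x \<noteq> z"
  obtains lam \<alpha> \<beta> where "0 < lam" "lam \<le> 1" "l1dist x z = 2 * lam"
    "\<alpha> \<in> std_simplex" "\<beta> \<in> std_simplex" "x - z = lam *\<^sub>R (\<alpha> - \<beta>)" "\<And>j. lam * \<beta>$j \<le> z$j"
proof -
  define lam where "lam = l1dist x z / 2"
  define \<alpha> where "\<alpha> = (\<chi> j. max (x$j - z$j) 0 / lam)"
  define \<beta> where "\<beta> = (\<chi> j. max (z$j - x$j) 0 / lam)"
  have x_nonneg: "\<And>j. 0 \<le> x$j" and x_sum: "(\<Sum>j\<in>UNIV. x$j) = 1" using x by (auto simp: mem_std_simplex)
  have z_nonneg: "\<And>j. 0 \<le> z$j" and z_sum: "(\<Sum>j\<in>UNIV. z$j) = 1" using z by (auto simp: mem_std_simplex)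
  have lam_pos: "0 < lam" unfolding lam_def using l1dist_pos[OF \<open>x \<noteq> z\<close>] by simp
  define P where "P = (\<Sum>j\<in>UNIV. max (x$j - z$j) 0)"
  define M where "M = (\<Sum>j\<in>UNIV. max (z$j - x$j) 0)"
  \<comment> \<open>The positive and negative parts of \<open>x - z\<close> have equal mass, as \<open>x\<close> and \<open>z\<close> do.\<close>
  have "P + M = l1dist x z" unfolding P_def M_def l1dist_def sum.distrib[symmetric]
    by (intro sum.cong) auto
  moreover have "P - M = (\<Sum>j\<in>UNIV. x$j - z$j)" unfolding P_def M_def sum_subtractf[symmetric]
    by (intro sum.cong) auto
  ultimately have PM: "P = lam" "M = lam" using x_sum z_sum unfolding lam_def by (auto simp: sum_subtractf)
  show ?thesis
  proof
    show "0 < lam" by (fact lam_pos)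
    show "lam \<le> 1" unfolding lam_def using l1dist_le_2[OF x z] by simp
    show "l1dist x z = 2 * lam" unfolding lam_def by simp
    show "\<alpha> \<in> std_simplex" unfolding mem_std_simplex \<alpha>_def
      using lam_pos PM(1) by (auto simp: P_def sum_divide_distrib[symmetric])
    show "\<beta> \<in> std_simplex" unfolding mem_std_simplex \<beta>_def
      using lam_pos PM(2) by (auto simp: M_def sum_divide_distrib[symmetric])
    show "x - z = lam *\<^sub>R (\<alpha> - \<beta>)"
      unfolding \<alpha>_def \<beta>_def using lam_pos by (auto simp: vec_eq_iff field_simps)
    show "lam * \<beta>$j \<le> z$j" for j
      unfolding \<beta>_def using lam_pos x_nonneg[of j] z_nonneg[of j] by simp
  qed
qed

lemma l1_sum_shift_lt:
  fixes \<alpha> \<rho> :: "real^'n"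
  assumes \<alpha>: "\<alpha> \<in> std_simplex" and \<rho>: "\<rho> \<in> std_simplex" and \<theta>: "0 < \<theta>" "\<theta> < 1" and i: "\<alpha>$i \<noteq> 0"
  shows "(\<Sum>j\<in>UNIV. \<bar>\<alpha>$j - \<theta> * axis i 1 $ j - (1 - \<theta>) * \<rho>$j\<bar>) < 2"
proof -
  have \<alpha>_nonneg: "\<And>j. 0 \<le> \<alpha>$j" and \<alpha>_sum: "(\<Sum>j\<in>UNIV. \<alpha>$j) = 1" using \<alpha> by (auto simp: mem_std_simplex)
  have \<rho>_nonneg: "\<And>j. 0 \<le> \<rho>$j" and \<rho>_sum: "(\<Sum>j\<in>UNIV. \<rho>$j) = 1" using \<rho> by (auto simp: mem_std_simplex)
  define m where "m = min (\<alpha>$i) \<theta>"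
  have m_pos: "0 < m" unfolding m_def using i \<alpha>_nonneg[of i] \<theta> by auto
  have entry: "\<bar>\<alpha>$j - \<theta> * axis i 1 $ j - (1 - \<theta>) * \<rho>$j\<bar>
      \<le> \<alpha>$j + \<theta> * axis i 1 $ j + (1 - \<theta>) * \<rho>$j - (if j = i then 2 * m else 0)" for j
  proof (cases "j = i")
    case True
    have "\<bar>\<alpha>$i - \<theta> - (1 - \<theta>) * \<rho>$i\<bar> \<le> \<bar>\<alpha>$i - \<theta>\<bar> + (1 - \<theta>) * \<rho>$i"
      using abs_triangle_ineq4[of "\<alpha>$i - \<theta>" "(1 - \<theta>) * \<rho>$i"] \<theta> \<rho>_nonneg[of i] by simp
    also have "\<bar>\<alpha>$i - \<theta>\<bar> = \<alpha>$i + \<theta> - 2 * m" unfolding m_def by (auto simp: min_def)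
    finally show ?thesis using True by (simp add: axis_def)
  next
    case False
    then show ?thesis using \<alpha>_nonneg[of j] \<rho>_nonneg[of j] \<theta> by (simp add: axis_def abs_le_iff)
  qed
  have "(\<Sum>j\<in>UNIV. \<bar>\<alpha>$j - \<theta> * axis i 1 $ j - (1 - \<theta>) * \<rho>$j\<bar>)
      \<le> (\<Sum>j\<in>UNIV. \<alpha>$j + \<theta> * axis i 1 $ j + (1 - \<theta>) * \<rho>$j - (if j = i then 2 * m else 0))"
    by (intro sum_mono entry)
  also have "\<dots> = 2 - 2 * m"
    using \<alpha>_sum \<rho>_sum by (simp add: sum.distrib sum_subtractf sum_distrib_left[symmetric] axis_def)
  finally show ?thesis using m_pos by simp
qed

lemma std_simplex_shift:
  assumes "z \<in> std_simplex" "\<beta> \<in> std_simplex" "\<gamma> \<in> std_simplex" "\<And>j. lam * \<beta>$j \<le> z$j" "0 \<le> lam"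
  shows "z - lam *\<^sub>R \<beta> + lam *\<^sub>R \<gamma> \<in> std_simplex"
  using assms by (auto simp: mem_std_simplex sum.distrib sum_subtractf sum_distrib_left[symmetric]
      intro!: add_nonneg_nonneg)

lemma nearest_point_support_avoids_face:
  fixes c :: "'n::finite \<Rightarrow> 'v::euclidean_space"
  assumes z: "z \<in> std_simplex"
    and nearest: "\<And>z'. z' \<in> std_simplex \<Longrightarrow> weighted_sum z' c = weighted_sum z c \<Longrightarrow> l1dist x z \<le> l1dist x z'"
    and lam: "0 < lam" "l1dist x z = 2 * lam"
    and \<alpha>\<beta>: "\<alpha> \<in> std_simplex" "\<beta> \<in> std_simplex" "x - z = lam *\<^sub>R (\<alpha> - \<beta>)" "\<And>j. lam * \<beta>$j \<le> z$j"
    and G: "G face_of convex hull (range c)" "weighted_sum \<beta> c \<in> rel_interior G"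
    and i: "\<alpha>$i \<noteq> 0"
  shows "c i \<notin> G"
proof
  assume "c i \<in> G"
  moreover have "G \<noteq> {}" using G(2) rel_interior_subset by blast
  ultimately obtain e where e: "e > 1" "(1 - e) *\<^sub>R c i + e *\<^sub>R weighted_sum \<beta> c \<in> G"
    using convex_rel_interior_iff[OF face_of_imp_convex[OF G(1)]] G(2) by blast
  then have "(1 - e) *\<^sub>R c i + e *\<^sub>R weighted_sum \<beta> c \<in> convex hull (range c)"
    using face_of_imp_subset[OF G(1)] by blast
  then obtain \<rho> where \<rho>: "\<rho> \<in> std_simplex" "weighted_sum \<rho> c = (1 - e) *\<^sub>R c i + e *\<^sub>R weighted_sum \<beta> c"
    unfolding convex_hull_range_eq_weighted_sums by auto
  define \<theta> where "\<theta> = 1 - 1 / e"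
  have \<theta>: "0 < \<theta>" "\<theta> < 1" unfolding \<theta>_def using e(1) by (auto simp: field_simps)
  \<comment> \<open>Inside \<open>G\<close>, the part \<open>\<beta>\<close> of \<open>z\<close> can be rerouted through column \<open>i\<close>, which \<open>\<alpha>\<close> uses:
      this keeps \<open>weighted_sum z c\<close> and brings \<open>z\<close> strictly closer to \<open>x\<close>.\<close>
  define \<gamma> where "\<gamma> = \<theta> *\<^sub>R axis i 1 + (1 - \<theta>) *\<^sub>R \<rho>"
  define z' where "z' = z - lam *\<^sub>R \<beta> + lam *\<^sub>R \<gamma>"
  have "\<gamma> \<in> std_simplex"
    unfolding \<gamma>_def using \<theta> \<rho>(1) axis_in_std_simplex by (intro convexD[OF convex_std_simplex]) auto
  then have "z' \<in> std_simplex"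
    unfolding z'_def using lam(1) by (intro std_simplex_shift[OF z \<alpha>\<beta>(2)] \<alpha>\<beta>(4)) simp_all
  moreover have "weighted_sum z' c = weighted_sum z c"
  proof -
    have "weighted_sum \<gamma> c = weighted_sum \<beta> c"
      unfolding \<gamma>_def weighted_sum_add weighted_sum_scaleR weighted_sum_axis \<rho>(2) \<theta>_def
      using e(1) by (simp add: algebra_simps)
    then show ?thesis unfolding z'_def weighted_sum_add weighted_sum_diff weighted_sum_scaleR by simp
  qed
  ultimately have "l1dist x z \<le> l1dist x z'" by (rule nearest)
  moreover have "x - z' = lam *\<^sub>R (\<alpha> - \<gamma>)" unfolding z'_def using \<alpha>\<beta>(3) by (simp add: algebra_simps)
  then have "x$j - z'$j = lam * (\<alpha>$j - \<theta> * axis i 1 $ j - (1 - \<theta>) * \<rho>$j)" for j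
    unfolding \<gamma>_def by (simp add: vec_eq_iff algebra_simps)
  then have "l1dist x z' = lam * (\<Sum>j\<in>UNIV. \<bar>\<alpha>$j - \<theta> * axis i 1 $ j - (1 - \<theta>) * \<rho>$j\<bar>)"
    unfolding l1dist_def using lam(1) by (simp add: abs_mult sum_distrib_left)
  moreover have "\<dots> < 2 * lam"
    using l1_sum_shift_lt[OF \<alpha>\<beta>(1) \<rho>(1) \<theta> i] lam(1) by simp
  ultimately show False using lam(2) by simp
qed

lemma nearest_point_facial_decomposition:
  fixes c :: "'n::finite \<Rightarrow> 'v::euclidean_space"
  assumes F: "F face_of convex hull (range c)" "weighted_sum z c \<in> F"
    and x: "x \<in> std_simplex" and z: "z \<in> std_simplex" "x \<noteq> z"
    and nearest: "\<And>z'. z' \<in> std_simplex \<Longrightarrow> weighted_sum z' c = weighted_sum z c \<Longrightarrow> l1dist x z \<le> l1dist x z'"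
  obtains lam \<alpha> \<beta> G where "0 < lam" "lam \<le> 1" "l1dist x z = 2 * lam" "x - z = lam *\<^sub>R (\<alpha> - \<beta>)"
    "G face_of F" "G \<noteq> {}" "G \<noteq> convex hull (range c)"
    "weighted_sum \<beta> c \<in> G" "weighted_sum \<alpha> c \<in> convex hull {c j | j. c j \<notin> G}"
proof -
  obtain lam \<alpha> \<beta> where lam: "0 < lam" "lam \<le> 1" "l1dist x z = 2 * lam"
    and \<alpha>\<beta>: "\<alpha> \<in> std_simplex" "\<beta> \<in> std_simplex" "x - z = lam *\<^sub>R (\<alpha> - \<beta>)" "\<And>j. lam * \<beta>$j \<le> z$j"
    by (rule l1dist_decomposition[OF x z]) blast
  have "weighted_sum \<beta> c \<in> convex hull (c ` {j. c j \<in> F})"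
  proof (rule weighted_sum_in_convex_hull[OF \<alpha>\<beta>(2)])
    fix j assume "\<beta>$j \<noteq> 0"
    moreover have "0 \<le> \<beta>$j" using \<alpha>\<beta>(2) by (simp add: mem_std_simplex)
    ultimately have "0 < \<beta>$j" by linarith
    then have "z$j \<noteq> 0" using \<alpha>\<beta>(4)[of j] lam(1) by (smt (verit) mult_pos_pos)
    then show "j \<in> {j. c j \<in> F}" using face_of_convex_hull_range_support[OF F(1) z(1) F(2)] by simp
  qed
  also have "\<dots> \<subseteq> F" using face_of_imp_convex[OF F(1)] by (intro hull_minimal) auto
  finally have \<beta>F: "weighted_sum \<beta> c \<in> F" .
  then obtain G where G: "G face_of convex hull (range c)" "weighted_sum \<beta> c \<in> rel_interior G"
    and G_min: "\<And>H. H face_of convex hull (range c) \<Longrightarrow> weighted_sum \<beta> c \<in> H \<Longrightarrow> G \<subseteq> H"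
    using minimal_face_rel_interior[OF polytope_convex_hull_range] face_of_imp_subset[OF F(1)] by blast
  have \<alpha>_avoids: "c i \<notin> G" if "\<alpha>$i \<noteq> 0" for i
    using nearest_point_support_avoids_face[OF z(1) nearest lam(1,3) \<alpha>\<beta> G that] by blast
  obtain i where "\<alpha>$i \<noteq> 0" using \<alpha>\<beta>(1) by (rule std_simplex_nonzero_entry)
  then have "G \<noteq> convex hull (range c)" using \<alpha>_avoids hull_inc[of "c i" "range c"] by blast
  moreover have "G face_of F" using G(1) G_min[OF F(1) \<beta>F] face_of_imp_subset[OF F(1)] face_of_subset by blast
  moreover have "weighted_sum \<beta> c \<in> G" using G(2) rel_interior_subset by blast
  moreover have "weighted_sum \<alpha> c \<in> convex hull {c j | j. c j \<notin> G}"
  proof -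
    have "{c j | j. c j \<notin> G} = c ` {j. c j \<notin> G}" by blast
    then show ?thesis using weighted_sum_in_convex_hull[OF \<alpha>\<beta>(1), of "{j. c j \<notin> G}" c] \<alpha>_avoids by auto
  qed
  ultimately show ?thesis using that lam \<alpha>\<beta>(3) by blast
qed

section \<open>The composite problem\<close>

lemma bounded_linear_eq_inner:
  fixes D :: "'a::euclidean_space \<Rightarrow> real"
  assumes "bounded_linear D"
  shows "D = (\<lambda>h. (\<Sum>i\<in>Basis. D i *\<^sub>R i) \<bullet> h)"
proof
  fix h
  have "D h = D (\<Sum>i\<in>Basis. (h \<bullet> i) *\<^sub>R i)" by (simp add: euclidean_representation)
  also have "\<dots> = (\<Sum>i\<in>Basis. (h \<bullet> i) * D i)"
    using bounded_linear.linear[OF assms] by (simp add: linear_sum linear_scale)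
  also have "\<dots> = (\<Sum>i\<in>Basis. D i * (i \<bullet> h))" by (simp add: inner_commute mult.commute)
  also have "\<dots> = (\<Sum>i\<in>Basis. D i *\<^sub>R i) \<bullet> h" by (simp add: inner_sum_left)
  finally show "D h = (\<Sum>i\<in>Basis. D i *\<^sub>R i) \<bullet> h" .
qed

locale composite_problem =
  fixes N :: "real^'p \<Rightarrow> real"
    and A :: "real^'n^'m" and b :: "real^'m" and E :: "real^'m^'p"
    and g :: "real^'p \<Rightarrow> ereal" and \<mu> :: real
  assumes norm: "is_norm N"
    and two_cols: "\<exists>i j. (E *v column i A, b \<bullet> column i A) \<noteq> (E *v column j A, b \<bullet> column j A)"
    and g_proper: "\<forall>w. g w \<noteq> -\<infinity>"
    and g_diff: "\<forall>w. g w \<noteq> \<infinity> \<longrightarrow>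
        (\<exists>U. open U \<and> w \<in> U \<and> (\<forall>x\<in>U. g x \<noteq> \<infinity>)) \<and>
        (\<lambda>x. real_of_ereal (g x)) differentiable (at w)"
    and mu_pos: "\<mu> > 0"
    and g_strong: "strongly_convex_on N g \<mu> (convex hull (range (\<lambda>j. E *v column j A)))"
    and dom: "\<forall>u \<in> convex hull (range (\<lambda>j. column j A)). g (E *v u) + ereal (b \<bullet> u) \<noteq> \<infinity>"
begin

abbreviation conv_A where "conv_A \<equiv> convex hull (range (\<lambda>j. column j A))"
abbreviation conv_EA where "conv_EA \<equiv> convex hull (range (\<lambda>j. E *v column j A))"

definition g_real :: "real^'p \<Rightarrow> real" where "g_real w = real_of_ereal (g w)"
definition phi :: "real^'m \<Rightarrow> real" where "phi u = g_real (E *v u) + b \<bullet> u"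

lemma conv_A_eq: "conv_A = (\<lambda>x. A *v x) ` std_simplex"
  unfolding convex_hull_range_eq_weighted_sums matrix_vector_mult_eq_weighted_sum ..

lemma conv_EA_eq: "conv_EA = (\<lambda>u. E *v u) ` conv_A"
  by (simp add: convex_hull_linear_image image_image)

lemma g_finite: "w \<in> conv_EA \<Longrightarrow> g w = ereal (g_real w)"
  using dom g_proper unfolding conv_EA_eq g_real_def by (cases "g w") auto

lemma objective_eq: "u \<in> conv_A \<Longrightarrow> g (E *v u) + ereal (b \<bullet> u) = ereal (phi u)"
  unfolding phi_def using g_finite conv_EA_eq by simp

lemma has_derivative_g_real: "w \<in> conv_EA \<Longrightarrow> (g_real has_derivative (\<lambda>h. grad g w \<bullet> h)) (at w)"
proof -
  assume "w \<in> conv_EA"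
  then have "g w \<noteq> \<infinity>" using g_finite by simp
  then have "g_real differentiable (at w)" using g_diff unfolding g_real_def[abs_def] by blast
  then obtain D where D: "(g_real has_derivative D) (at w)" unfolding differentiable_def by blast
  then have "\<exists>d. ((\<lambda>x. real_of_ereal (g x)) has_derivative (\<lambda>h. d \<bullet> h)) (at w)"
    using bounded_linear_eq_inner[OF has_derivative_bounded_linear[OF D]] unfolding g_real_def[abs_def]
    by metis
  then show ?thesis unfolding grad_def g_real_def[abs_def] by (rule someI_ex)
qed

lemma g_real_strongly_convex:
  assumes "w \<in> conv_EA" "w' \<in> conv_EA"
  shows "g_real w' \<ge> g_real w + grad g w \<bullet> (w' - w) + \<mu> / 2 * (N (w' - w))\<^sup>2"
  using g_strong assms g_finite[OF assms(1)] g_finite[OF assms(2)] unfolding strongly_convex_on_def by force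

lemma continuous_on_phi: "continuous_on conv_A phi"
proof (rule continuous_at_imp_continuous_on, rule ballI)
  fix u assume "u \<in> conv_A"
  then have "isCont g_real (E *v u)"
    using has_derivative_g_real has_derivative_continuous conv_EA_eq by blast
  moreover have "isCont (\<lambda>u. E *v u) u"
    by (rule linear_continuous_at) (simp add: linear_conv_bounded_linear[symmetric])
  ultimately have "isCont (\<lambda>u. g_real (E *v u)) u" using isCont_o2 by blast
  then show "isCont phi u" unfolding phi_def[abs_def] by (intro continuous_intros)
qed

lemma argmin_objective_eq: "argmin_on conv_A (\<lambda>u. g (E *v u) + ereal (b \<bullet> u)) = argmin_on conv_A phi"
  unfolding argmin_on_def using objective_eq by auto

lemma argmin_phi_nonempty: "argmin_on conv_A phi \<noteq> {}"
  using continuous_attains_inf[OF finite_imp_compact_convex_hull _ continuous_on_phi]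
  unfolding argmin_on_def by auto

lemma minimizers_agree:
  assumes u1: "u1 \<in> argmin_on conv_A phi" and u2: "u2 \<in> argmin_on conv_A phi"
  shows "E *v u1 = E *v u2" "b \<bullet> u1 = b \<bullet> u2"
proof -
  define um where "um = (1/2) *\<^sub>R u1 + (1/2) *\<^sub>R u2"
  have u12: "u1 \<in> conv_A" "u2 \<in> conv_A" "phi u1 = phi u2" using u1 u2 by (auto simp: argmin_on_def antisym)
  have um: "um \<in> conv_A" unfolding um_def using u12 by (intro convexD) auto
  define w1 w2 wm where "w1 = E *v u1" and "w2 = E *v u2" and "wm = E *v um"
  have w: "w1 \<in> conv_EA" "w2 \<in> conv_EA" "wm \<in> conv_EA" using u12 um unfolding w1_def w2_def wm_def conv_EA_eq by auto
  have d: "w1 - wm = (1/2) *\<^sub>R (w1 - w2)" "w2 - wm = (-1/2) *\<^sub>R (w1 - w2)"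
    unfolding w1_def w2_def wm_def um_def by (simp_all add: matrix_vector_right_distrib matrix_vector_mult_scaleR
        vec_eq_iff field_simps)
  \<comment> \<open>Strong convexity at the midpoint, from both ends: the linear terms cancel.\<close>
  have n: "N (w1 - wm) = N (w1 - w2) / 2" "N (w2 - wm) = N (w1 - w2) / 2"
    unfolding d is_normD(3)[OF norm] by simp_all
  have "grad g wm \<bullet> (w1 - wm) + grad g wm \<bullet> (w2 - wm) = 0"
    unfolding d by (simp add: inner_scaleR_right)
  moreover have "\<mu> / 2 * (N (w1 - w2) / 2)\<^sup>2 = \<mu> / 4 * (N (w1 - w2))\<^sup>2 / 2"
    by (simp add: power_divide)
  ultimately have "g_real w1 + g_real w2 \<ge> 2 * g_real wm + \<mu> / 4 * (N (w1 - w2))\<^sup>2"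
    using g_real_strongly_convex[OF w(3) w(1)] g_real_strongly_convex[OF w(3) w(2)]
    unfolding n by linarith
  moreover have "b \<bullet> um = (b \<bullet> u1 + b \<bullet> u2) / 2" unfolding um_def by (simp add: inner_add_right)
  moreover have "phi u1 \<le> phi um" "phi u2 \<le> phi um" using u1 u2 um by (auto simp: argmin_on_def)
  ultimately have "\<mu> / 4 * (N (w1 - w2))\<^sup>2 \<le> 0" using u12(3) unfolding phi_def w1_def w2_def wm_def by argo
  then have "N (w1 - w2) = 0" using mu_pos by (simp add: mult_le_0_iff)
  then show "E *v u1 = E *v u2" using is_normD(2)[OF norm] unfolding w1_def w2_def by simp
  then show "b \<bullet> u1 = b \<bullet> u2" using u12(3) unfolding phi_def by simp
qed

lemma first_order_optimality:
  assumes us: "us \<in> argmin_on conv_A phi" and u: "u \<in> conv_A"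
  shows "grad g (E *v us) \<bullet> (E *v u - E *v us) + b \<bullet> (u - us) \<ge> 0"
proof (rule ccontr)
  define D where "D = grad g (E *v us) \<bullet> (E *v u - E *v us) + b \<bullet> (u - us)"
  assume "\<not> ?thesis"
  then have "D < 0" unfolding D_def by simp
  define h where "h t = phi (us + t *\<^sub>R (u - us))" for t
  have "E *v us \<in> conv_EA" using us unfolding argmin_on_def conv_EA_eq by auto
  then have g': "(g_real has_derivative (\<lambda>h. grad g (E *v us) \<bullet> h)) (at (E *v us + 0 *\<^sub>R (E *v u - E *v us)))"
    using has_derivative_g_real by simp
  have line': "((\<lambda>t. E *v us + t *\<^sub>R (E *v u - E *v us)) has_derivative
      (\<lambda>t. t *\<^sub>R (E *v u - E *v us))) (at 0)"
    by (auto intro!: derivative_eq_intros)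
  have "((\<lambda>t. g_real (E *v us + t *\<^sub>R (E *v u - E *v us))) has_derivative
      (\<lambda>t. grad g (E *v us) \<bullet> (t *\<^sub>R (E *v u - E *v us)))) (at 0)"
    using diff_chain_at[OF line' g'] by (simp add: o_def)
  moreover have "h = (\<lambda>t. g_real (E *v us + t *\<^sub>R (E *v u - E *v us)) + b \<bullet> (us + t *\<^sub>R (u - us)))"
    unfolding h_def phi_def by (simp add: algebra_simps)
  ultimately have "(h has_derivative (\<lambda>t. D * t)) (at 0)"
    unfolding D_def by (auto intro!: derivative_eq_intros simp: inner_scaleR_right algebra_simps)
  then have "DERIV h 0 :> D" by (simp add: has_field_derivative_def)
  from DERIV_neg_dec_right[OF this \<open>D < 0\<close>] obtain d where d: "d > 0" "\<And>t. 0 < t \<Longrightarrow> t < d \<Longrightarrow> h t < h 0"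
    by auto
  define t where "t = min (d/2) 1"
  have t: "0 < t" "t < d" "t \<le> 1" unfolding t_def using d by auto
  have "us + t *\<^sub>R (u - us) = (1 - t) *\<^sub>R us + t *\<^sub>R u" by (simp add: algebra_simps)
  also have "\<dots> \<in> conv_A" using t us u unfolding argmin_on_def by (intro convexD) auto
  finally have "h 0 \<le> h t" using us unfolding h_def argmin_on_def by simp
  then show False using d(2) t by force
qed

end

locale composite_minimizer = composite_problem N A b E g \<mu>
  for N :: "real^'p \<Rightarrow> real"
    and A :: "real^'n^'m" and b :: "real^'m" and E :: "real^'m^'p"
    and g :: "real^'p \<Rightarrow> ereal" and \<mu> :: real +
  fixes us :: "real^'m"
  assumes us_min: "us \<in> argmin_on conv_A phi"
begin

definition v :: "real^'p" where "v = (2 / \<mu>) *\<^sub>R grad g (E *v us)"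
definition lift :: "real^'m \<Rightarrow> (real^'p) \<times> real" where "lift u = (E *v u, (2 / \<mu>) * (b \<bullet> u))"
definition Abar :: "'n \<Rightarrow> (real^'p) \<times> real" where "Abar j = lift (column j A)"

lemma us_conv_A: "us \<in> conv_A" and phi_us_le: "u \<in> conv_A \<Longrightarrow> phi us \<le> phi u"
  using us_min by (auto simp: argmin_on_def)

lemma linear_lift: "linear lift"
  by (rule linearI) (simp_all add: lift_def matrix_vector_right_distrib matrix_vector_mult_scaleR
      inner_add_right algebra_simps)

lemma weighted_sum_Abar: "weighted_sum x Abar = lift (A *v x)"
  unfolding Abar_def matrix_vector_mult_eq_weighted_sum linear_weighted_sum[OF linear_lift] ..

lemma inner_lift_diff:
  "(v, 1) \<bullet> (lift u - lift us) = (2 / \<mu>) * (grad g (E *v us) \<bullet> (E *v u - E *v us) + b \<bullet> (u - us))"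
  by (simp add: lift_def v_def inner_diff_right algebra_simps)

lemma lift_us_in_Fface: "lift us \<in> Fface v Abar"
proof -
  have hull: "convex hull (range Abar) = lift ` conv_A"
    using convex_hull_linear_image[OF linear_lift, of "range (\<lambda>j. column j A)"]
    unfolding Abar_def by (simp add: image_image)
  have "(v, 1) \<bullet> lift us \<le> (v, 1) \<bullet> lift u" if "u \<in> conv_A" for u
  proof -
    have "0 \<le> (2 / \<mu>) * (grad g (E *v us) \<bullet> (E *v u - E *v us) + b \<bullet> (u - us))"
      using first_order_optimality[OF us_min that] mu_pos by simp
    then show ?thesis unfolding inner_lift_diff[symmetric] by (simp add: inner_diff_right)
  qed
  then show ?thesis
    unfolding Fface_def argmin_on_def hull using us_conv_A by (auto simp: inner_Pair_one[symmetric])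
qed

lemma objective_gap:
  assumes u: "u \<in> conv_A"
  shows "phi u - phi us \<ge> \<mu> / 2 * (vnorm N v (lift u - lift us))\<^sup>2"
proof -
  define L where "L = grad g (E *v us) \<bullet> (E *v u - E *v us) + b \<bullet> (u - us)"
  have "L \<ge> 0" unfolding L_def by (rule first_order_optimality[OF us_min u])
  then have "(vnorm N v (lift u - lift us))\<^sup>2 = (N (E *v u - E *v us))\<^sup>2 + (2 / \<mu>) * L"
    using mu_pos inner_lift_diff[of u] unfolding vnorm_def L_def
    by (simp add: inner_Pair_one[symmetric] lift_def)
  then have "\<mu> / 2 * (vnorm N v (lift u - lift us))\<^sup>2 = \<mu> / 2 * (N (E *v u - E *v us))\<^sup>2 + L"
    using mu_pos by (simp add: field_simps)
  moreover have "g_real (E *v u) \<ge> g_real (E *v us) + grad g (E *v us) \<bullet> (E *v u - E *v us)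
      + \<mu> / 2 * (N (E *v u - E *v us))\<^sup>2"
    using g_real_strongly_convex u us_conv_A conv_EA_eq by blast
  ultimately show ?thesis unfolding phi_def L_def by (simp add: inner_diff_right)
qed

lemma minimizer_iff_lift: "u \<in> conv_A \<Longrightarrow> phi u = phi us \<longleftrightarrow> lift u = lift us"
proof
  assume "u \<in> conv_A" "phi u = phi us"
  then have "u \<in> argmin_on conv_A phi" using phi_us_le by (simp add: argmin_on_def)
  then show "lift u = lift us" using minimizers_agree[OF _ us_min] by (simp add: lift_def)
next
  assume "lift u = lift us"
  then show "phi u = phi us" using mu_pos by (simp add: lift_def phi_def)
qed

lemma local_facial_distance_Abar_pos: "0 < local_facial_distance N v Abar"
proof -
  obtain i j where "(E *v column i A, b \<bullet> column i A) \<noteq> (E *v column j A, b \<bullet> column j A)"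
    using two_cols by blast
  then have "Abar i \<noteq> Abar j" using mu_pos by (auto simp: Abar_def lift_def)
  then show ?thesis by (rule local_facial_distance_pos[OF norm])
qed

lemma growth_at_nearest_solution:
  assumes x: "x \<in> std_simplex" and z: "z \<in> std_simplex" "lift (A *v z) = lift us" "x \<noteq> z"
    and nearest: "\<And>z'. z' \<in> std_simplex \<Longrightarrow> lift (A *v z') = lift us \<Longrightarrow> l1dist x z \<le> l1dist x z'"
  shows "\<mu> * (local_facial_distance N v Abar)\<^sup>2 / 4 * (l1dist x z)\<^sup>2 \<le> 2 * (phi (A *v x) - phi us)"
proof -
  let ?\<Phi> = "local_facial_distance N v Abar"
  have F: "weighted_sum z Abar \<in> Fface v Abar" using lift_us_in_Fface z(2) by (simp add: weighted_sum_Abar)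
  have nearest': "l1dist x z \<le> l1dist x z'"
    if "z' \<in> std_simplex" "weighted_sum z' Abar = weighted_sum z Abar" for z'
    using nearest that z(2) by (simp add: weighted_sum_Abar)
  obtain lam \<alpha> \<beta> G where lam: "0 < lam" "lam \<le> 1" "l1dist x z = 2 * lam" "x - z = lam *\<^sub>R (\<alpha> - \<beta>)"
    and G: "G face_of Fface v Abar" "G \<noteq> {}" "G \<noteq> convex hull (range Abar)"
      "weighted_sum \<beta> Abar \<in> G" "weighted_sum \<alpha> Abar \<in> convex hull {Abar j | j. Abar j \<notin> G}"
    by (rule nearest_point_facial_decomposition[OF Fface_face_of F x z(1,3) nearest'])
  define d where "d = weighted_sum \<beta> Abar - weighted_sum \<alpha> Abar"
  have "?\<Phi> \<le> vnorm N v d" unfolding d_def by (rule local_facial_distance_le[OF G])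
  then have "?\<Phi>\<^sup>2 \<le> (vnorm N v d)\<^sup>2" using local_facial_distance_Abar_pos by (simp add: power_mono)
  then have "lam\<^sup>2 * ?\<Phi>\<^sup>2 \<le> lam\<^sup>2 * (vnorm N v d)\<^sup>2" by (simp add: mult_left_mono)
  also have "\<dots> \<le> (vnorm N v ((- lam) *\<^sub>R d))\<^sup>2"
    using vnorm_scaleR_ge[OF norm, of "- lam" v d] lam(1,2) by (simp only: power2_minus abs_minus_cancel)
  also have "(- lam) *\<^sub>R d = lift (A *v x) - lift us"
    unfolding d_def z(2)[symmetric] weighted_sum_Abar[symmetric] weighted_sum_diff[symmetric]
      weighted_sum_scaleR[symmetric] lam(4) by (simp add: algebra_simps)
  finally have "\<mu> * (lam\<^sup>2 * ?\<Phi>\<^sup>2) \<le> \<mu> * (vnorm N v (lift (A *v x) - lift us))\<^sup>2"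
    using mu_pos by simp
  also have "\<dots> \<le> 2 * (phi (A *v x) - phi us)"
    using objective_gap[of "A *v x"] x unfolding conv_A_eq by auto
  finally show ?thesis unfolding lam(3) by (simp add: power_mult_distrib algebra_simps)
qed

lemma nearest_solution_exists:
  defines "Z \<equiv> {z \<in> std_simplex. lift (A *v z) = lift us}"
  obtains z where "z \<in> Z" "\<And>z'. z' \<in> Z \<Longrightarrow> l1dist x z \<le> l1dist x z'"
proof -
  have "closed {z. lift (A *v z) = lift us}"
    unfolding weighted_sum_Abar[symmetric]
    by (intro closed_Collect_eq continuous_on_weighted_sum continuous_on_const)
  moreover have "Z = std_simplex \<inter> {z. lift (A *v z) = lift us}" unfolding Z_def by blast
  ultimately have "compact Z" using compact_Int_closed[OF compact_std_simplex] by simp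
  moreover have "Z \<noteq> {}" using us_conv_A unfolding Z_def conv_A_eq by auto
  ultimately obtain z where "z \<in> Z" "\<forall>z'\<in>Z. l1dist x z \<le> l1dist x z'"
    using continuous_attains_inf[OF _ _ continuous_on_l1dist] by blast
  then show ?thesis using that by blast
qed

lemma qfg_const_ge:
  "qfg_const (\<lambda>u. g (E *v u) + ereal (b \<bullet> u)) A \<ge> ereal (\<mu> * (local_facial_distance N v Abar)\<^sup>2 / 4)"
proof -
  define f where "f = (\<lambda>u. g (E *v u) + ereal (b \<bullet> u))"
  define Z where "Z = {z \<in> std_simplex. lift (A *v z) = lift us}"
  have fA: "f (A *v x) = ereal (phi (A *v x))" if "x \<in> std_simplex" for x
    unfolding f_def using objective_eq that conv_A_eq by auto
  have f_star: "(INF x\<in>std_simplex. f (A *v x)) = ereal (phi us)"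
  proof (rule antisym)
    obtain zs where "zs \<in> std_simplex" "us = A *v zs" using us_conv_A unfolding conv_A_eq by auto
    then show "(INF x\<in>std_simplex. f (A *v x)) \<le> ereal (phi us)" by (metis INF_lower fA)
    show "ereal (phi us) \<le> (INF x\<in>std_simplex. f (A *v x))"
      using fA phi_us_le conv_A_eq by (auto intro!: INF_greatest)
  qed
  have Z_eq: "{z \<in> std_simplex. f (A *v z) = ereal (phi us)} = Z"
    unfolding Z_def using fA minimizer_iff_lift conv_A_eq by auto
  have "ereal (\<mu> * (local_facial_distance N v Abar)\<^sup>2 / 4)
      \<le> 2 * (f (A *v x) - ereal (phi us)) / ereal ((INF z\<in>Z. l1dist x z)\<^sup>2)"
    if x: "x \<in> std_simplex - Z" for x
  proof -
    obtain z where z: "z \<in> Z" "\<And>z'. z' \<in> Z \<Longrightarrow> l1dist x z \<le> l1dist x z'"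
      unfolding Z_def by (rule nearest_solution_exists[where x = x]) blast
    have "(INF z\<in>Z. l1dist x z) = l1dist x z"
      using z by (intro antisym cINF_lower cINF_greatest bdd_belowI[of _ 0]) (auto simp: l1dist_nonneg)
    moreover have "x \<noteq> z" using x z(1) by blast
    then have "0 < l1dist x z" by (rule l1dist_pos)
    moreover have "\<mu> * (local_facial_distance N v Abar)\<^sup>2 / 4 * (l1dist x z)\<^sup>2 \<le> 2 * (phi (A *v x) - phi us)"
      using growth_at_nearest_solution \<open>x \<noteq> z\<close> x z unfolding Z_def by auto
    ultimately show ?thesis using x fA by (simp add: field_simps)
  qed
  then show ?thesis
    unfolding qfg_const_def Let_def f_def[symmetric] f_star Z_eq by (rule INF_greatest)
qed

end

theorem theorem1:
  fixes N :: "real^'p \<Rightarrow> real"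
    and A :: "real^'n^'m" and b :: "real^'m" and E :: "real^'m^'p"
    and g :: "real^'p \<Rightarrow> ereal" and \<mu> :: real
  assumes norm: "is_norm N"
    and two_cols: "\<exists>i j. (E *v column i A, b \<bullet> column i A) \<noteq> (E *v column j A, b \<bullet> column j A)"
    and g_proper: "\<forall>w. g w \<noteq> -\<infinity>"
    and g_convex: "ext_convex g"
    and g_diff: "\<forall>w. g w \<noteq> \<infinity> \<longrightarrow>
        (\<exists>U. open U \<and> w \<in> U \<and> (\<forall>x\<in>U. g x \<noteq> \<infinity>)) \<and>
        (\<lambda>x. real_of_ereal (g x)) differentiable (at w)"
    and mu_pos: "\<mu> > 0"
    and g_strong: "strongly_convex_on N g \<mu> (convex hull (range (\<lambda>j. E *v column j A)))"
    and dom: "\<forall>u \<in> convex hull (range (\<lambda>j. column j A)). g (E *v u) + ereal (b \<bullet> u) \<noteq> \<infinity>"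
  shows "argmin_on (convex hull (range (\<lambda>j. column j A))) (\<lambda>u. g (E *v u) + ereal (b \<bullet> u)) \<noteq> {}
    \<and> (\<forall>u1 \<in> argmin_on (convex hull (range (\<lambda>j. column j A))) (\<lambda>u. g (E *v u) + ereal (b \<bullet> u)).
       \<forall>u2 \<in> argmin_on (convex hull (range (\<lambda>j. column j A))) (\<lambda>u. g (E *v u) + ereal (b \<bullet> u)).
         (2 / \<mu>) *\<^sub>R grad g (E *v u1) = (2 / \<mu>) *\<^sub>R grad g (E *v u2))
    \<and> (\<forall>u \<in> argmin_on (convex hull (range (\<lambda>j. column j A))) (\<lambda>u. g (E *v u) + ereal (b \<bullet> u)).
         let v = (2 / \<mu>) *\<^sub>R grad g (E *v u);
             Abar = (\<lambda>j. (E *v column j A, (2 / \<mu>) * (b \<bullet> column j A)))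
         in qfg_const (\<lambda>u. g (E *v u) + ereal (b \<bullet> u)) A
              \<ge> ereal (\<mu> * (local_facial_distance N v Abar)\<^sup>2 / 4)
            \<and> local_facial_distance N v Abar > 0)"
proof -
  interpret composite_problem N A b E g \<mu>
    by unfold_locales (fact norm two_cols g_proper g_diff mu_pos g_strong dom)+
  show ?thesis
    unfolding argmin_objective_eq
  proof (intro conjI ballI)
    show "argmin_on conv_A phi \<noteq> {}" by (rule argmin_phi_nonempty)
  next
    fix u1 u2 assume "u1 \<in> argmin_on conv_A phi" "u2 \<in> argmin_on conv_A phi"
    then show "(2 / \<mu>) *\<^sub>R grad g (E *v u1) = (2 / \<mu>) *\<^sub>R grad g (E *v u2)"
      using minimizers_agree(1) by metis
  next
    fix u assume "u \<in> argmin_on conv_A phi"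
    then interpret composite_minimizer N A b E g \<mu> u by unfold_locales
    show "let v = (2 / \<mu>) *\<^sub>R grad g (E *v u);
             Abar = (\<lambda>j. (E *v column j A, (2 / \<mu>) * (b \<bullet> column j A)))
         in qfg_const (\<lambda>u. g (E *v u) + ereal (b \<bullet> u)) A
              \<ge> ereal (\<mu> * (local_facial_distance N v Abar)\<^sup>2 / 4)
            \<and> local_facial_distance N v Abar > 0"
      using qfg_const_ge local_facial_distance_Abar_pos
      unfolding Let_def v_def Abar_def[abs_def] lift_def by simp
  qed
qed

end
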